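(* Let $d>0$, let $\mathcal{S}$ be the 4-PAM constellation labeled by any Gray labeling, and let $\mathcal{B}$ be any rate-$1/2$ binary convolutional code generated by $\boldsymbol{G}(D)=[g_1(D),\,g_2(D)]$ with $g_1(D),g_2(D)$ nonzero binary polynomials. Then $\mathsf{L}(\mathcal{B})=0$.
   Context: $\mathcal{S}=\{s_1,s_2,s_3,s_4\}$ with $s_1=-3d$, $s_2=-d$, $s_3=d$, $s_4=3d$. A labeling is a bijection $\Phi_{\mathcal{S}}:\{0,1\}^2\to\mathcal{S}$, described by $\boldsymbol{q}=[q_1,\dots,q_4]$ where $q_i$ is the integer whose two-bit representation (most significant bit first) is $\Phi_{\mathcal{S}}^{-1}(s_i)$; the Gray labelings are $[0,1,3,2]$, $[0,2,3,1]$, $[1,0,2,3]$, $[2,0,1,3]$. The convolutional code $\mathcal{B}$ consists of the sequences $\boldsymbol{b}=(\boldsymbol{b}[k])_k$, $\boldsymbol{b}[k]=[b_1[k],b_2[k]]$, whose odd bits $b_1(D)=u(D)g_1(D)$ and even bits $b_2(D)=u(D)g_2(D)$, as $u(D)$ ranges over binary formal Laurent series (the same code is generated by $[1,\,g_2(D)/g_1(D)]$ and by $[g_1(D)/g_2(D),\,1]$). The CM code is $\mathcal{X}=\{(\Phi_{\mathcal{S}}(\boldsymbol{b}[k]))_k:\boldsymbol{b}\in\mathcal{B}\}$. For symbol sequences $\boldsymbol{x},\hat{\boldsymbol{x}}$ and each position $k$ with $x[k]\neq\hat{x}[k]$: $\mu^{\mathcal{X}}_k=\sigma^{2,\mathcal{X}}_k=(x[k]-\hat{x}[k])^2/(4d^2)$;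 $\mu^{\mathcal{B}}_k=\sigma^{2,\mathcal{B}}_k=(x[k]-\hat{x}[k])^2/(4d^2)$ except that if $\{x[k],\hat{x}[k]\}=\{s_1,s_4\}$ then $\mu^{\mathcal{B}}_k=3$, $\sigma^{2,\mathcal{B}}_k=1$. Summing over $k$ with $x[k]\neq\hat{x}[k]$, $a^{\mathcal{X}}(\boldsymbol{x},\hat{\boldsymbol{x}})=\sum_k\mu^{\mathcal{X}}_k/\sqrt{\sum_k\sigma^{2,\mathcal{X}}_k}$ and $a^{\mathcal{B}}(\boldsymbol{x},\hat{\boldsymbol{x}})=\sum_k\mu^{\mathcal{B}}_k/\sqrt{\sum_k\sigma^{2,\mathcal{B}}_k}$ (taken to be $+\infty$ if the sequences differ in infinitely many positions). The asymptotic loss of the code is $\mathsf{L}(\mathcal{B})=20\log_{10}\Big(\min_{\boldsymbol{x}\neq\hat{\boldsymbol{x}}\in\mathcal{X}}a^{\mathcal{X}}(\boldsymbol{x},\hat{\boldsymbol{x}})\big/\min_{\boldsymbol{x}\neq\hat{\boldsymbol{x}}\in\mathcal{X}}a^{\mathcal{B}}(\boldsymbol{x},\hat{\boldsymbol{x}})\Big)$ dB. *)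

theory Defs
  imports Complex_Main "HOL-Library.Extended_Real"
begin

text \<open>Binary formal Laurent series: sequences indexed by int whose support is bounded below.\<close>
definition laurent :: "(int \<Rightarrow> bool) \<Rightarrow> bool" where
  "laurent u \<longleftrightarrow> (\<exists>N. \<forall>k<N. \<not> u k)"

definition nonzero_bpoly :: "(nat \<Rightarrow> bool) \<Rightarrow> bool" where
  "nonzero_bpoly g \<longleftrightarrow> finite {j. g j} \<and> (\<exists>j. g j)"

text \<open>Coefficient k of the GF(2) product u(D) g(D).\<close>
definition bconv :: "(nat \<Rightarrow> bool) \<Rightarrow> (int \<Rightarrow> bool) \<Rightarrow> int \<Rightarrow> bool" where
  "bconv g u k = odd (card {j. g j \<and> u (k - int j)})"

text \<open>Symbols s_1..s_4 = -3d,-d,d,3d; 0-based index i gives (2i-3)d.\<close>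
definition pam :: "real \<Rightarrow> nat \<Rightarrow> real" where
  "pam d i = d * (2 * real i - 3)"

text \<open>Labeling Phi given by q: bits (b1,b2), b1 most significant, map to s_i with q_i = 2 b1 + b2.\<close>
definition label :: "nat list \<Rightarrow> real \<Rightarrow> bool \<Rightarrow> bool \<Rightarrow> real" where
  "label q d b1 b2 = pam d (THE i. i < 4 \<and> q ! i = 2 * of_bool b1 + of_bool b2)"

definition gray_labelings :: "nat list set" where
  "gray_labelings = {[0,1,3,2], [0,2,3,1], [1,0,2,3], [2,0,1,3]}"

definition cm_code :: "nat list \<Rightarrow> real \<Rightarrow> (nat \<Rightarrow> bool) \<Rightarrow> (nat \<Rightarrow> bool) \<Rightarrow> (int \<Rightarrow> real) set" where
  "cm_code q d g1 g2 = {(\<lambda>k. label q d (bconv g1 u k) (bconv g2 u k)) | u. laurent u}"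

definition diffset :: "(int \<Rightarrow> real) \<Rightarrow> (int \<Rightarrow> real) \<Rightarrow> int set" where
  "diffset x xh = {k. x k \<noteq> xh k}"

definition muX :: "real \<Rightarrow> real \<Rightarrow> real \<Rightarrow> real" where
  "muX d a b = (a - b)^2 / (4 * d^2)"

definition muB :: "real \<Rightarrow> real \<Rightarrow> real \<Rightarrow> real" where
  "muB d a b = (if {a, b} = {-3*d, 3*d} then 3 else (a - b)^2 / (4 * d^2))"

definition sigB :: "real \<Rightarrow> real \<Rightarrow> real \<Rightarrow> real" where
  "sigB d a b = (if {a, b} = {-3*d, 3*d} then 1 else (a - b)^2 / (4 * d^2))"

definition aX :: "real \<Rightarrow> (int \<Rightarrow> real) \<Rightarrow> (int \<Rightarrow> real) \<Rightarrow> ereal" where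
  "aX d x xh = (if finite (diffset x xh) then
     ereal ((\<Sum>k\<in>diffset x xh. muX d (x k) (xh k)) / sqrt (\<Sum>k\<in>diffset x xh. muX d (x k) (xh k)))
   else \<infinity>)"

definition aB :: "real \<Rightarrow> (int \<Rightarrow> real) \<Rightarrow> (int \<Rightarrow> real) \<Rightarrow> ereal" where
  "aB d x xh = (if finite (diffset x xh) then
     ereal ((\<Sum>k\<in>diffset x xh. muB d (x k) (xh k)) / sqrt (\<Sum>k\<in>diffset x xh. sigB d (x k) (xh k)))
   else \<infinity>)"

definition min_aX :: "nat list \<Rightarrow> real \<Rightarrow> (nat \<Rightarrow> bool) \<Rightarrow> (nat \<Rightarrow> bool) \<Rightarrow> ereal" where
  "min_aX q d g1 g2 = Inf {aX d x xh | x xh. x \<in> cm_code q d g1 g2 \<and> xh \<in> cm_code q d g1 g2 \<and> x \<noteq> xh}"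

definition min_aB :: "nat list \<Rightarrow> real \<Rightarrow> (nat \<Rightarrow> bool) \<Rightarrow> (nat \<Rightarrow> bool) \<Rightarrow> ereal" where
  "min_aB q d g1 g2 = Inf {aB d x xh | x xh. x \<in> cm_code q d g1 g2 \<and> xh \<in> cm_code q d g1 g2 \<and> x \<noteq> xh}"

definition asym_loss :: "nat list \<Rightarrow> real \<Rightarrow> (nat \<Rightarrow> bool) \<Rightarrow> (nat \<Rightarrow> bool) \<Rightarrow> real" where
  "asym_loss q d g1 g2 = 20 * log 10 (real_of_ereal (min_aX q d g1 g2) / real_of_ereal (min_aB q d g1 g2))"

end

theory Submission
  imports Defs "HOL-Analysis.Convex"
begin

text \<open>The minima agree in both directions. Pointwise \<open>a\<^sup>B \<le> a\<^sup>X\<close> by Cauchy--Schwarz, since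
  \<open>(\<mu>\<^sup>B\<^sub>k)\<^sup>2 \<le> \<mu>\<^sup>X\<^sub>k \<sigma>\<^sup>B\<^sub>k\<close> at every position. Conversely, given codewords \<open>x \<noteq> y\<close> differing on a
  finite set \<open>D\<close>, add one codeword \<open>w\<close> to both underlying bit sequences. By linearity the
  result is again a pair of codewords differing exactly on \<open>D\<close>. Since \<open>g\<^sub>1, g\<^sub>2 \<noteq> 0\<close>, \<open>w\<close> can
  be chosen so that the first new word takes only the inner values \<open>\<plusminus>d\<close> on \<open>D\<close>; then each
  \<open>\<mu>\<^sup>X\<close> of the new pair is at most the \<open>\<sigma>\<^sup>B\<close> of the old pair, so
  \<open>a\<^sup>X(new) = \<surd>\<Sigma>\<mu>\<^sup>X \<le> \<surd>\<Sigma>\<sigma>\<^sup>B \<le> \<Sigma>\<mu>\<^sup>B / \<surd>\<Sigma>\<sigma>\<^sup>B = a\<^sup>B(old)\<close>.\<close>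

lemma odd_card_sym_diff:
  assumes "finite A" "finite B"
  shows "odd (card ((A - B) \<union> (B - A))) \<longleftrightarrow> odd (card A) \<noteq> odd (card B)"
proof -
  have "card ((A - B) \<union> (B - A)) = card (A - B) + card (B - A)"
    using assms by (intro card_Un_disjoint) auto
  moreover have "card A = card (A \<inter> B) + card (A - B)"
    using assms(1) by (rule card_Int_Diff)
  moreover have "card B = card (A \<inter> B) + card (B - A)"
    using card_Int_Diff[OF assms(2), of A] by (simp add: Int_commute)
  ultimately show ?thesis by presburger
qed

lemma bconv_xor:
  assumes "finite {j. g j}"
  shows "bconv g (\<lambda>n. u n \<noteq> w n) k \<longleftrightarrow> bconv g u k \<noteq> bconv g w k"
proof -
  let ?A = "{j. g j \<and> u (k - int j)}" and ?B = "{j. g j \<and> w (k - int j)}"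
  have "finite ?A" "finite ?B" using assms by (auto intro: finite_subset)
  moreover have "{j. g j \<and> (u (k - int j) \<noteq> w (k - int j))} = (?A - ?B) \<union> (?B - ?A)" by auto
  ultimately show ?thesis unfolding bconv_def by (simp add: odd_card_sym_diff)
qed

lemma bconv_impulse: "bconv g (\<lambda>n. n = p) k \<longleftrightarrow> p \<le> k \<and> g (nat (k - p))"
proof -
  have "{j. g j \<and> k - int j = p} = (if p \<le> k \<and> g (nat (k - p)) then {nat (k - p)} else {})"
    by auto
  then show ?thesis unfolding bconv_def by simp
qed

lemma laurent_xor: "laurent u \<Longrightarrow> laurent w \<Longrightarrow> laurent (\<lambda>n. u n \<noteq> w n)"
  unfolding laurent_def by (metis min.strict_boundedE)

lemma laurent_impulse: "laurent (\<lambda>n. n = p)"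
  unfolding laurent_def by auto

text \<open>Outputs are fixed from left to right: toggling the input at \<open>b - j0\<close>, where \<open>j0\<close> is the
  lowest tap of \<open>g\<close>, toggles output \<open>b\<close> and leaves all earlier outputs unchanged.\<close>
lemma bconv_interpolate:
  assumes "nonzero_bpoly g" "finite F"
  obtains u where "laurent u" "\<And>k. k \<in> F \<Longrightarrow> bconv g u k = t k"
proof -
  have fin: "finite {j. g j}" and ne: "{j. g j} \<noteq> {}"
    using assms(1) by (auto simp: nonzero_bpoly_def)
  define j0 where "j0 = Min {j. g j}"
  have j0: "g j0" and j0_min: "\<And>j. g j \<Longrightarrow> j0 \<le> j"
    using Min_in[OF fin ne] Min_le[OF fin] by (auto simp: j0_def)
  have "\<exists>u. laurent u \<and> (\<forall>k\<in>F. bconv g u k = t k)"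
    using assms(2)
  proof (induction F rule: finite_linorder_max_induct)
    case empty
    show ?case by (intro exI[of _ "\<lambda>_. False"]) (simp add: laurent_def)
  next
    case (insert b A)
    then obtain u where u: "laurent u" "\<forall>k\<in>A. bconv g u k = t k" by blast
    define e where "e = (\<lambda>n. n = b - int j0)"
    have e_below: "\<not> bconv g e k" if "k < b" for k
      using that by (auto simp: e_def bconv_impulse dest!: j0_min)
    have e_top: "bconv g e b"
      using j0 by (simp add: e_def bconv_impulse)
    define u' where "u' = (if bconv g u b = t b then u else (\<lambda>n. u n \<noteq> e n))"
    have "laurent u'"
      using u(1) laurent_xor[OF u(1) laurent_impulse] by (simp add: u'_def e_def)
    moreover have "\<forall>k\<in>insert b A. bconv g u' k = t k"
      using u(2) insert(2) e_below e_top bconv_xor[OF fin, of u e] by (auto simp: u'_def)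
    ultimately show ?case by blast
  qed
  then show ?thesis using that by blast
qed

lemma sum_div_sqrt_le_sqrt_sum:
  fixes a b m :: "'i \<Rightarrow> real"
  assumes "\<And>k. k \<in> A \<Longrightarrow> 0 \<le> a k \<and> 0 \<le> b k \<and> 0 \<le> m k"
    and "\<And>k. k \<in> A \<Longrightarrow> (m k)\<^sup>2 \<le> a k * b k"
  shows "(\<Sum>k\<in>A. m k) / sqrt (\<Sum>k\<in>A. b k) \<le> sqrt (\<Sum>k\<in>A. a k)"
proof -
  have "(\<Sum>k\<in>A. m k) \<le> (\<Sum>k\<in>A. sqrt (a k) * sqrt (b k))"
    using assms by (intro sum_mono) (simp add: real_le_rsqrt flip: real_sqrt_mult)
  also have "\<dots> \<le> sqrt (\<Sum>k\<in>A. a k) * sqrt (\<Sum>k\<in>A. b k)"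
  proof -
    have "(\<Sum>k\<in>A. sqrt (a k) * sqrt (b k))\<^sup>2 \<le> (\<Sum>k\<in>A. a k) * (\<Sum>k\<in>A. b k)"
      using Cauchy_Schwarz_ineq_sum[of "\<lambda>k. sqrt (a k)" "\<lambda>k. sqrt (b k)" A] assms
      by (simp cong: sum.cong)
    then show ?thesis
      by (simp add: real_le_rsqrt flip: real_sqrt_mult)
  qed
  finally have "(\<Sum>k\<in>A. m k) \<le> sqrt (\<Sum>k\<in>A. a k) * sqrt (\<Sum>k\<in>A. b k)" .
  moreover have "0 \<le> (\<Sum>k\<in>A. a k)" "0 \<le> (\<Sum>k\<in>A. b k)"
    using assms by (simp_all add: sum_nonneg)
  ultimately show ?thesis
    by (cases "sqrt (\<Sum>k\<in>A. b k) = 0") (simp_all add: divide_le_eq)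
qed

lemma sqrt_le_div_sqrt:
  fixes S T M :: real
  assumes "0 \<le> S" "S \<le> T" "T \<le> M"
  shows "sqrt S \<le> M / sqrt T"
proof -
  have "sqrt S \<le> sqrt T" using assms by simp
  also have "\<dots> = T / sqrt T" using assms by (simp add: real_div_sqrt)
  also have "\<dots> \<le> M / sqrt T" using assms by (simp add: divide_right_mono)
  finally show ?thesis .
qed

text \<open>At the antipodal pair \<open>{-3d, 3d}\<close> this reads \<open>3\<^sup>2 \<le> 9 \<cdot> 1\<close>; elsewhere all three agree.\<close>
lemma muB_sq_le_muX_sigB:
  assumes "d > 0"
  shows "(muB d a b)\<^sup>2 \<le> muX d a b * sigB d a b"
proof (cases "{a, b} = {-3*d, 3*d}")
  case True
  then have "muX d a b = 9"
    using assms unfolding muX_def doubleton_eq_iff by (auto simp: power2_eq_square field_simps)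
  with True show ?thesis by (simp add: muB_def sigB_def)
qed (simp add: muB_def sigB_def muX_def power2_eq_square)

lemma aX_eq_sqrt:
  "finite (diffset x xh) \<Longrightarrow> aX d x xh = ereal (sqrt (\<Sum>k\<in>diffset x xh. muX d (x k) (xh k)))"
  by (simp add: aX_def real_div_sqrt sum_nonneg muX_def)

lemma aB_le_aX:
  assumes "d > 0"
  shows "aB d x xh \<le> aX d x xh"
proof (cases "finite (diffset x xh)")
  case True
  have "(\<Sum>k\<in>diffset x xh. muB d (x k) (xh k)) / sqrt (\<Sum>k\<in>diffset x xh. sigB d (x k) (xh k))
    \<le> sqrt (\<Sum>k\<in>diffset x xh. muX d (x k) (xh k))"
    using assms muB_sq_le_muX_sigB
    by (intro sum_div_sqrt_le_sqrt_sum) (auto simp: muX_def muB_def sigB_def)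
  with True show ?thesis by (simp add: aB_def aX_eq_sqrt)
qed (simp add: aB_def aX_def)

lemma less_4_cases: "(i::nat) < 4 \<longleftrightarrow> i = 0 \<or> i = 1 \<or> i = 2 \<or> i = 3"
  by (auto simp: numeral_eq_Suc less_Suc_eq)

lemma label_gray:
  "label [0,1,3,2] d b1 b2 = d * (if b1 then (if b2 then 1 else 3) else (if b2 then -1 else -3))"
  "label [0,2,3,1] d b1 b2 = d * (if b1 then (if b2 then 1 else -1) else (if b2 then 3 else -3))"
  "label [1,0,2,3] d b1 b2 = d * (if b1 then (if b2 then 3 else 1) else (if b2 then -3 else -1))"
  "label [2,0,1,3] d b1 b2 = d * (if b1 then (if b2 then 3 else -3) else (if b2 then 1 else -1))"
  by (cases b1; cases b2; simp add: label_def pam_def less_4_cases conj_disj_distribR cong: conj_cong)+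

lemma muX_scaled: "d \<noteq> 0 \<Longrightarrow> muX d (d * a) (d * b) = (a - b)^2 / 4"
  by (simp add: muX_def power_mult_distrib flip: right_diff_distrib)

lemma sigB_scaled:
  assumes "d > 0"
  shows "sigB d (d * a) (d * b) = (if {a, b} = {-3, 3} then 1 else (a - b)^2 / 4)"
proof -
  have "{d * a, d * b} = {-3*d, 3*d} \<longleftrightarrow> (*) d ` {a, b} = (*) d ` {-3, 3}"
    by (simp add: mult.commute)
  also have "\<dots> \<longleftrightarrow> {a, b} = {-3, 3}"
    using assms by (intro inj_image_eq_iff) (simp add: inj_on_def)
  finally show ?thesis
    unfolding sigB_def using assms by (simp add: power_mult_distrib flip: right_diff_distrib)
qed

text \<open>In a Gray labeling one bit (\<open>b1\<close> if \<open>sel\<close>, else \<open>b2\<close>) separates the inner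
  points \<open>\<plusminus>d\<close> from the outer points \<open>\<plusminus>3d\<close>, and \<open>v\<close> is its value on the inner ones. Adding
  the same bits \<open>c1, c2\<close> to two labels preserves which bits differ; if this moves the first
  point inside, the squared distance of the new pair is at most \<open>\<sigma>\<^sup>B\<close> of the old pair.\<close>
lemma gray_labeling_inner_bit:
  assumes "d > 0" "q \<in> gray_labelings"
  obtains sel v where
    "\<And>b1 b2 bh1 bh2 c1 c2. (if sel then b1 \<noteq> c1 else b2 \<noteq> c2) = v \<Longrightarrow>
      muX d (label q d (b1 \<noteq> c1) (b2 \<noteq> c2)) (label q d (bh1 \<noteq> c1) (bh2 \<noteq> c2))
      \<le> sigB d (label q d b1 b2) (label q d bh1 bh2)"
proof -
  have d: "d \<noteq> 0" using assms(1) by simp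
  note scaled = muX_scaled[OF d] sigB_scaled[OF assms(1)] doubleton_eq_iff
  consider "q = [0,1,3,2]" | "q = [0,2,3,1]" | "q = [1,0,2,3]" | "q = [2,0,1,3]"
    using assms(2) unfolding gray_labelings_def by blast
  then show ?thesis
  proof cases
    case 1
    show ?thesis by (rule that[of False True]) (unfold 1 label_gray, auto simp: scaled)
  next
    case 2
    show ?thesis by (rule that[of True True]) (unfold 2 label_gray, auto simp: scaled)
  next
    case 3
    show ?thesis by (rule that[of False False]) (unfold 3 label_gray, auto simp: scaled)
  next
    case 4
    show ?thesis by (rule that[of True False]) (unfold 4 label_gray, auto simp: scaled)
  qed
qed

lemma label_gray_inj:
  assumes "d > 0" "q \<in> gray_labelings"
  shows "label q d a b = label q d a' b' \<longleftrightarrow> a = a' \<and> b = b'"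
  using assms unfolding gray_labelings_def
  by (auto simp only: insert_iff empty_iff label_gray mult_cancel_left;
      cases a; cases b; cases a'; cases b'; simp)

definition cm_encode :: "nat list \<Rightarrow> real \<Rightarrow> (nat \<Rightarrow> bool) \<Rightarrow> (nat \<Rightarrow> bool) \<Rightarrow> (int \<Rightarrow> bool) \<Rightarrow> int \<Rightarrow> real" where
  "cm_encode q d g1 g2 u = (\<lambda>k. label q d (bconv g1 u k) (bconv g2 u k))"

lemma cm_code_eq_image: "cm_code q d g1 g2 = cm_encode q d g1 g2 ` {u. laurent u}"
  unfolding cm_code_def cm_encode_def by auto

lemma cm_encode_xor:
  assumes "nonzero_bpoly g1" "nonzero_bpoly g2"
  shows "cm_encode q d g1 g2 (\<lambda>n. u n \<noteq> w n) k
    = label q d (bconv g1 u k \<noteq> bconv g1 w k) (bconv g2 u k \<noteq> bconv g2 w k)"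
proof -
  have "finite {j. g1 j}" "finite {j. g2 j}"
    using assms by (simp_all add: nonzero_bpoly_def)
  then show ?thesis
    unfolding cm_encode_def by (simp only: bconv_xor)
qed

lemma diffset_cm_encode_xor:
  assumes "d > 0" "q \<in> gray_labelings" "nonzero_bpoly g1" "nonzero_bpoly g2"
  shows "diffset (cm_encode q d g1 g2 (\<lambda>n. u n \<noteq> w n)) (cm_encode q d g1 g2 (\<lambda>n. uh n \<noteq> w n))
    = diffset (cm_encode q d g1 g2 u) (cm_encode q d g1 g2 uh)"
  unfolding diffset_def cm_encode_xor[OF assms(3,4)]
  by (auto simp: cm_encode_def label_gray_inj[OF assms(1,2)])

lemma cm_code_pair_aX_le_aB:
  assumes d: "d > 0" and q: "q \<in> gray_labelings"
    and g: "nonzero_bpoly g1" "nonzero_bpoly g2"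
    and x: "x \<in> cm_code q d g1 g2" and xh: "xh \<in> cm_code q d g1 g2" and "x \<noteq> xh"
  shows "\<exists>x'\<in>cm_code q d g1 g2. \<exists>xh'\<in>cm_code q d g1 g2. x' \<noteq> xh' \<and> aX d x' xh' \<le> aB d x xh"
proof (cases "finite (diffset x xh)")
  case False
  then show ?thesis using x xh \<open>x \<noteq> xh\<close> by (auto simp: aB_def)
next
  case True
  obtain u uh where u: "laurent u" "laurent uh"
    and x_eq: "x = cm_encode q d g1 g2 u" and xh_eq: "xh = cm_encode q d g1 g2 uh"
    using x xh by (auto simp: cm_code_eq_image)
  define D where "D = diffset x xh"
  obtain sel v where inner: "\<And>b1 b2 bh1 bh2 c1 c2. (if sel then b1 \<noteq> c1 else b2 \<noteq> c2) = v \<Longrightarrow>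
      muX d (label q d (b1 \<noteq> c1) (b2 \<noteq> c2)) (label q d (bh1 \<noteq> c1) (bh2 \<noteq> c2))
      \<le> sigB d (label q d b1 b2) (label q d bh1 bh2)"
    using gray_labeling_inner_bit[OF d q] by blast
  have g_sel: "nonzero_bpoly (if sel then g1 else g2)"
    using g by simp
  obtain w where w: "laurent w"
    and w_D: "\<And>k. k \<in> D \<Longrightarrow> bconv (if sel then g1 else g2) w k
                = ((if sel then bconv g1 u k else bconv g2 u k) \<noteq> v)"
    using bconv_interpolate[OF g_sel, of D "\<lambda>k. (if sel then bconv g1 u k else bconv g2 u k) \<noteq> v"]
      True unfolding D_def by blast
  define x' where "x' = cm_encode q d g1 g2 (\<lambda>n. u n \<noteq> w n)"
  define xh' where "xh' = cm_encode q d g1 g2 (\<lambda>n. uh n \<noteq> w n)"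
  have D': "diffset x' xh' = D"
    unfolding x'_def xh'_def D_def x_eq xh_eq by (rule diffset_cm_encode_xor[OF d q g])
  have "x' \<in> cm_code q d g1 g2" "xh' \<in> cm_code q d g1 g2"
    using laurent_xor[OF _ w] u by (auto simp: cm_code_eq_image x'_def xh'_def)
  moreover have "x' \<noteq> xh'"
    using D' \<open>x \<noteq> xh\<close> by (auto simp: D_def diffset_def)
  moreover have "muX d (x' k) (xh' k) \<le> sigB d (x k) (xh k)" if "k \<in> D" for k
  proof -
    have "x' k = label q d (bconv g1 u k \<noteq> bconv g1 w k) (bconv g2 u k \<noteq> bconv g2 w k)"
      "xh' k = label q d (bconv g1 uh k \<noteq> bconv g1 w k) (bconv g2 uh k \<noteq> bconv g2 w k)"
      unfolding x'_def xh'_def by (rule cm_encode_xor[OF g])+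
    moreover have "x k = label q d (bconv g1 u k) (bconv g2 u k)"
      "xh k = label q d (bconv g1 uh k) (bconv g2 uh k)"
      by (simp_all add: x_eq xh_eq cm_encode_def)
    ultimately show ?thesis
      by (simp only:) (rule inner, use w_D[OF that] in \<open>cases sel; cases v; simp\<close>)
  qed
  then have "sqrt (\<Sum>k\<in>D. muX d (x' k) (xh' k))
      \<le> (\<Sum>k\<in>D. muB d (x k) (xh k)) / sqrt (\<Sum>k\<in>D. sigB d (x k) (xh k))"
    by (intro sqrt_le_div_sqrt sum_nonneg sum_mono) (auto simp: muX_def muB_def sigB_def)
  then have "aX d x' xh' \<le> aB d x xh"
    using True by (simp add: aX_eq_sqrt aB_def D' D_def)
  ultimately show ?thesis by blast
qed

theorem theorem4:
  fixes d :: real and q :: "nat list" and g1 g2 :: "nat \<Rightarrow> bool"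
  assumes "d > 0"
    and "q \<in> gray_labelings"
    and "nonzero_bpoly g1" and "nonzero_bpoly g2"
  shows "asym_loss q d g1 g2 = 0"
proof -
  have "min_aB q d g1 g2 \<le> min_aX q d g1 g2"
    unfolding min_aB_def min_aX_def using aB_le_aX[OF assms(1)] by (intro Inf_mono) blast
  moreover have "min_aX q d g1 g2 \<le> min_aB q d g1 g2"
    unfolding min_aB_def min_aX_def
    using cm_code_pair_aX_le_aB[OF assms] by (intro Inf_mono) blast
  ultimately have "min_aX q d g1 g2 = min_aB q d g1 g2" by (rule antisym[rotated])
  then show ?thesis
    unfolding asym_loss_def
    by (cases "real_of_ereal (min_aB q d g1 g2) = 0") (simp_all add: log_def)
qed

end
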